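(* For every integer $b\ge0$, let $\mathcal{P}(b)$ be the set of unordered partitions of $b$ and for $q\in\mathcal{P}(b)$ let $o(q)$ be the number of parts of $q$ equal to $1$. Then \[ \operatorname{trace}(A_b)=\sum_{q\in\mathcal{P}(b)}2^{o(q)}. \]
   Context: For an integer $b\ge 0$, an ordered partition of $b$ is a finite sequence $(q_1,\ldots,q_k)$ of positive integers summing to $b$ (for $b=0$ the only one is the empty sequence). An ordered partition $(q_1,\ldots,q_k)$ with $k\ge1$ is nontrivially embedded into an ordered partition $(r_1,\ldots,r_\ell)$ by a choice of indices $1\le i_2<\cdots<i_k\le \ell$ with $q_j\le r_{i_j}$ for $2\le j\le k$; different index tuples count as different embeddings. A card for $b$ balls is either (i) a trivial card, given by an ordered partition $q$ of $b$, with left and right partitions both $q$; or (ii) a throw card, given by ordered partitions $q$ ($k\ge1$ parts) and $r$ of $b$ together with a nontrivial embedding of $q$ into $r$, with left partition $q$ and right partition $r$. Different index tuples give different cards, and a throw card is distinct from the trivial card even when $q=r$. $A_b$ is the square matrix with rows and columns indexed by the ordered partitions of $b$ whose $(u,v)$ entry is the number of cards for $b$ balls with left partition $u$ and right partition $v$. *)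

theory Defs
  imports Main "HOL-Library.Multiset"
begin

definition ordered_partitions :: "nat \<Rightarrow> nat list set" where
  "ordered_partitions b = {q. (\<forall>x\<in>set q. 0 < x) \<and> sum_list q = b}"

text \<open>Nontrivial embeddings of q = (q_1,...,q_k), k \<ge> 1, into r = (r_1,...,r_l):
  index tuples 1 \<le> i_2 < ... < i_k \<le> l with q_j \<le> r_{i_j} for 2 \<le> j \<le> k.
  Encoded 0-based: a list ix of length k-1, where ix!(j-2) = i_j - 1.\<close>
definition nontriv_embeddings :: "nat list \<Rightarrow> nat list \<Rightarrow> nat list set" where
  "nontriv_embeddings q r =
     {ix. q \<noteq> [] \<and> length ix = length q - 1 \<and> sorted_wrt (<) ix \<and>
          (\<forall>i\<in>set ix. i < length r) \<and>
          (\<forall>j < length ix. q ! (Suc j) \<le> r ! (ix ! j))}"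

datatype juggling_card = Trivial "nat list" | Throw "nat list" "nat list" "nat list"

fun left_part :: "juggling_card \<Rightarrow> nat list" where
  "left_part (Trivial q) = q"
| "left_part (Throw q r ix) = q"

fun right_part :: "juggling_card \<Rightarrow> nat list" where
  "right_part (Trivial q) = q"
| "right_part (Throw q r ix) = r"

definition cards :: "nat \<Rightarrow> juggling_card set" where
  "cards b = {Trivial q | q. q \<in> ordered_partitions b} \<union>
             {Throw q r ix | q r ix. q \<in> ordered_partitions b \<and> r \<in> ordered_partitions b \<and>
                 q \<noteq> [] \<and> ix \<in> nontriv_embeddings q r}"

definition A_entry :: "nat \<Rightarrow> nat list \<Rightarrow> nat list \<Rightarrow> nat" where
  "A_entry b u v = card {c \<in> cards b. left_part c = u \<and> right_part c = v}"

definition trace_A :: "nat \<Rightarrow> nat" where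
  "trace_A b = (\<Sum>u\<in>ordered_partitions b. A_entry b u u)"

definition unordered_partitions :: "nat \<Rightarrow> nat multiset set" where
  "unordered_partitions b = {p. (\<forall>x\<in>#p. 0 < x) \<and> sum_mset p = b}"

end

theory Submission imports Defs begin

text \<open>
  A self-embedding of a composition u with k parts picks k - 1 of its k indices, so it omits
  exactly one index d, and the embedding condition says precisely that the first d + 1 parts of u
  are nonincreasing. Together with the trivial card, the diagonal entry at u therefore counts the
  nonincreasing prefixes of u (the empty one included), and cutting u after such a prefix shows
  that the trace counts pairs (partition of b - n, composition of n). On the other side, 2^o is
  the number of compositions of all n \<le> o, so the right-hand side counts pairs (p, composition
  of n) with n \<le> o(p); removing n ones from p matches the two counts.
\<close>

lemma finite_ordered_partitions: "finite (ordered_partitions b)"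
proof -
  have "ordered_partitions b \<subseteq> {xs. set xs \<subseteq> {0..b} \<and> length xs \<le> b}"
  proof
    fix xs assume "xs \<in> ordered_partitions b"
    hence pos: "\<forall>x\<in>set xs. 0 < x" and sum: "sum_list xs = b"
      by (auto simp: ordered_partitions_def)
    have "length xs \<le> sum_list xs" using pos by (induction xs) auto
    with pos sum show "xs \<in> {xs. set xs \<subseteq> {0..b} \<and> length xs \<le> b}"
      by (auto dest: member_le_sum_list)
  qed
  thus ?thesis by (rule finite_subset) (simp add: finite_lists_length_le)
qed

lemma ordered_partitions_0: "ordered_partitions 0 = {[]}"
  by (auto simp: ordered_partitions_def) (metis gr_implies_not0 list.set_intros(1) neq_Nil_conv)

lemma card_ordered_partitions_Suc:
  "card (ordered_partitions (Suc n)) = (\<Sum>k\<le>n. card (ordered_partitions k))"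
proof -
  have "bij_betw (\<lambda>(k, v). (Suc n - k) # v) (Sigma {..n} ordered_partitions)
          (ordered_partitions (Suc n))"
  proof (rule bij_betw_byWitness[where f' = "\<lambda>u. (Suc n - hd u, tl u)"])
    have cons: "\<exists>x v. u = x # v \<and> 0 < x \<and> x \<le> Suc n \<and> v \<in> ordered_partitions (Suc n - x)"
      if "u \<in> ordered_partitions (Suc n)" for u
      using that by (cases u) (auto simp: ordered_partitions_def)
    show "\<forall>a\<in>ordered_partitions (Suc n). (\<lambda>(k, v). (Suc n - k) # v) (Suc n - hd a, tl a) = a"
      by (auto dest!: cons)
    show "(\<lambda>u. (Suc n - hd u, tl u)) ` ordered_partitions (Suc n) \<subseteq> Sigma {..n} ordered_partitions"
      by (auto dest!: cons)
  qed (auto simp: ordered_partitions_def)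
  hence "card (ordered_partitions (Suc n)) = card (Sigma {..n} ordered_partitions)"
    by (simp add: bij_betw_same_card)
  also have "\<dots> = (\<Sum>k\<le>n. card (ordered_partitions k))"
    using finite_ordered_partitions by simp
  finally show ?thesis .
qed

lemma sum_card_ordered_partitions: "(\<Sum>k\<le>n. card (ordered_partitions k)) = 2 ^ n"
  by (induction n) (simp_all add: ordered_partitions_0 card_ordered_partitions_Suc)

lemma finite_unordered_partitions: "finite (unordered_partitions b)"
proof -
  have "unordered_partitions b \<subseteq> mset ` ordered_partitions b"
  proof
    fix p assume "p \<in> unordered_partitions b"
    hence "sorted_list_of_multiset p \<in> ordered_partitions b"
      by (auto simp: ordered_partitions_def unordered_partitions_def simp flip: sum_mset_sum_list)
    thus "p \<in> mset ` ordered_partitions b" by (metis image_eqI mset_sorted_list_of_multiset)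
  qed
  thus ?thesis using finite_ordered_partitions finite_subset by blast
qed

definition skip_index :: "nat \<Rightarrow> nat \<Rightarrow> nat list" where
  "skip_index k d = [0..<d] @ [Suc d..<k]"

lemma length_skip_index: "d < k \<Longrightarrow> length (skip_index k d) = k - 1"
  by (simp add: skip_index_def)

lemma nth_skip_index: "d < k \<Longrightarrow> j < k - 1 \<Longrightarrow> skip_index k d ! j = (if j < d then j else Suc j)"
  by (simp add: skip_index_def nth_append)

lemma set_skip_index: "d < k \<Longrightarrow> set (skip_index k d) = {0..<k} - {d}"
  by (auto simp: skip_index_def)

lemma sorted_skip_index: "sorted_wrt (<) (skip_index k d)"
  by (simp add: skip_index_def sorted_wrt_append)

lemma inj_on_skip_index: "inj_on (skip_index k) {..<k}"
proof
  fix d d' assume "d \<in> {..<k}" "d' \<in> {..<k}" "skip_index k d = skip_index k d'"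
  hence "{0..<k} - {d} = {0..<k} - {d'}" by (simp flip: set_skip_index)
  moreover have "d \<in> {0..<k}" using \<open>d \<in> {..<k}\<close> by simp
  ultimately show "d = d'" by blast
qed

lemma strictly_sorted_eq_skip_index:
  assumes "sorted_wrt (<) ix" "length ix = k - 1" "\<forall>i\<in>set ix. i < k" "0 < k"
  obtains d where "d < k" "ix = skip_index k d"
proof -
  have distinct: "distinct ix" and sorted: "sorted ix"
    using assms(1) by (auto simp: strict_sorted_iff)
  have sub: "set ix \<subseteq> {0..<k}" using assms(3) by auto
  have "card (set ix) = k - 1" using distinct assms(2) by (simp add: distinct_card)
  hence "card ({0..<k} - set ix) = 1" using sub assms(4) by (simp add: card_Diff_subset finite_subset)
  then obtain d where d: "{0..<k} - set ix = {d}" by (auto simp: card_Suc_eq)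
  hence "d < k" by auto
  have "set ix = {0..<k} - {d}" using d sub by auto
  hence "set ix = set (skip_index k d)" using set_skip_index[OF \<open>d < k\<close>] by simp
  moreover have "sorted (skip_index k d)" "distinct (skip_index k d)"
    using sorted_skip_index[of k d] by (auto simp: strict_sorted_iff)
  ultimately have "ix = skip_index k d"
    using distinct sorted by (intro sorted_distinct_set_unique) auto
  with \<open>d < k\<close> show ?thesis by (rule that)
qed

definition nonincreasing_prefixes :: "nat list \<Rightarrow> nat set" where
  "nonincreasing_prefixes u = {m. m \<le> length u \<and> sorted_wrt (\<ge>) (take m u)}"

lemma skip_index_embeds_iff:
  fixes u :: "nat list"
  assumes "d < length u"
  shows "(\<forall>j < length u - 1. u ! Suc j \<le> u ! (skip_index (length u) d ! j))
           \<longleftrightarrow> Suc d \<in> nonincreasing_prefixes u"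
proof -
  have "(\<forall>j < length u - 1. u ! Suc j \<le> u ! (skip_index (length u) d ! j))
          \<longleftrightarrow> (\<forall>j < d. u ! Suc j \<le> u ! j)"
    using assms by (auto simp: nth_skip_index)
  also have "\<dots> \<longleftrightarrow> sorted_wrt (\<ge>) (take (Suc d) u)"
    using assms by (subst sorted_wrt_iff_nth_Suc_transp) (auto simp: transp_def)
  finally show ?thesis using assms by (simp add: nonincreasing_prefixes_def)
qed

lemma nontriv_embeddings_self:
  "nontriv_embeddings u u = skip_index (length u) ` {d. Suc d \<in> nonincreasing_prefixes u}"
proof (intro equalityI subsetI)
  fix ix assume ix: "ix \<in> nontriv_embeddings u u"
  hence "sorted_wrt (<) ix" "length ix = length u - 1" "\<forall>i\<in>set ix. i < length u" "0 < length u"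
    by (auto simp: nontriv_embeddings_def)
  then obtain d where d: "d < length u" "ix = skip_index (length u) d"
    by (rule strictly_sorted_eq_skip_index)
  with ix show "ix \<in> skip_index (length u) ` {d. Suc d \<in> nonincreasing_prefixes u}"
    by (auto simp: nontriv_embeddings_def skip_index_embeds_iff[symmetric])
next
  fix ix assume "ix \<in> skip_index (length u) ` {d. Suc d \<in> nonincreasing_prefixes u}"
  then obtain d where d: "Suc d \<in> nonincreasing_prefixes u" "ix = skip_index (length u) d"
    by auto
  hence "d < length u" by (simp add: nonincreasing_prefixes_def)
  moreover have "\<forall>j < length u - 1. u ! Suc j \<le> u ! (skip_index (length u) d ! j)"
    using skip_index_embeds_iff[OF \<open>d < length u\<close>] d(1) by blast
  ultimately show "ix \<in> nontriv_embeddings u u"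
    using d(2) by (auto simp: nontriv_embeddings_def length_skip_index sorted_skip_index set_skip_index)
qed

lemma nontriv_embeddings_nonempty: "ix \<in> nontriv_embeddings q r \<Longrightarrow> q \<noteq> []"
  by (simp add: nontriv_embeddings_def)

lemma A_entry_diagonal:
  assumes "u \<in> ordered_partitions b"
  shows "A_entry b u u = card (nonincreasing_prefixes u)"
proof -
  let ?D = "{d. Suc d \<in> nonincreasing_prefixes u}"
  have finite_D: "finite ?D"
    by (rule finite_subset[of _ "{..<length u}"]) (auto simp: nonincreasing_prefixes_def)
  have "{c \<in> cards b. left_part c = u \<and> right_part c = u}
          = insert (Trivial u) (Throw u u ` nontriv_embeddings u u)"
  proof (rule set_eqI)
    fix c
    show "c \<in> {c \<in> cards b. left_part c = u \<and> right_part c = u}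
            \<longleftrightarrow> c \<in> insert (Trivial u) (Throw u u ` nontriv_embeddings u u)"
      using assms by (cases c) (auto simp: cards_def dest: nontriv_embeddings_nonempty)
  qed
  also have "\<dots> = insert (Trivial u) ((Throw u u \<circ> skip_index (length u)) ` ?D)"
    by (simp add: nontriv_embeddings_self image_comp)
  finally have cards_u: "A_entry b u u
      = card (insert (Trivial u) ((Throw u u \<circ> skip_index (length u)) ` ?D))"
    by (simp add: A_entry_def)
  have "inj_on (Throw u u \<circ> skip_index (length u)) ?D"
    using inj_on_skip_index[of "length u"]
    by (auto simp: inj_on_def nonincreasing_prefixes_def)
  hence "card ((Throw u u \<circ> skip_index (length u)) ` ?D) = card ?D"
    by (rule card_image)
  with cards_u finite_D have "A_entry b u u = Suc (card ?D)"
    by (subst (asm) card_insert_disjoint) auto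
  also have "Suc (card ?D) = card (insert 0 (Suc ` ?D))"
    using finite_D by (simp add: card_image)
  also have "insert 0 (Suc ` ?D) = nonincreasing_prefixes u"
  proof (rule set_eqI)
    fix m
    show "m \<in> insert 0 (Suc ` ?D) \<longleftrightarrow> m \<in> nonincreasing_prefixes u"
      by (cases m) (auto simp: nonincreasing_prefixes_def)
  qed
  finally show ?thesis .
qed

definition nonincreasing_compositions :: "nat \<Rightarrow> nat list set" where
  "nonincreasing_compositions m = {l. sorted_wrt (\<ge>) l \<and> (\<forall>x\<in>set l. 0 < x) \<and> sum_list l = m}"

lemma card_nonincreasing_compositions:
  "card (nonincreasing_compositions m) = card (unordered_partitions m)"
proof -
  have "bij_betw mset (nonincreasing_compositions m) (unordered_partitions m)"
  proof (rule bij_betw_imageI)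
    show "inj_on mset (nonincreasing_compositions m)"
    proof
      fix l1 l2 assume "l1 \<in> nonincreasing_compositions m" "l2 \<in> nonincreasing_compositions m"
        and "mset l1 = mset l2"
      hence "sorted (rev l1)" "sorted (rev l2)" "mset (rev l1) = mset (rev l2)"
        by (auto simp: nonincreasing_compositions_def sorted_wrt_rev)
      hence "rev l1 = rev l2" by (metis properties_for_sort sorted_sort_id)
      thus "l1 = l2" by simp
    qed
    show "mset ` nonincreasing_compositions m = unordered_partitions m"
    proof
      show "mset ` nonincreasing_compositions m \<subseteq> unordered_partitions m"
        by (auto simp: nonincreasing_compositions_def unordered_partitions_def sum_mset_sum_list)
      show "unordered_partitions m \<subseteq> mset ` nonincreasing_compositions m"
      proof
        fix p assume "p \<in> unordered_partitions m"
        hence "rev (sorted_list_of_multiset p) \<in> nonincreasing_compositions m"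
          by (auto simp: nonincreasing_compositions_def unordered_partitions_def sorted_wrt_rev
              simp flip: sum_mset_sum_list)
        thus "p \<in> mset ` nonincreasing_compositions m"
          by (metis image_eqI mset_rev mset_sorted_list_of_multiset)
      qed
    qed
  qed
  thus ?thesis by (rule bij_betw_same_card)
qed

lemma trace_A_eq_convolution:
  "trace_A b = (\<Sum>n\<le>b. card (unordered_partitions (b - n)) * card (ordered_partitions n))"
proof -
  let ?S = "Sigma (ordered_partitions b) nonincreasing_prefixes"
  let ?T = "Sigma {..b} (\<lambda>n. nonincreasing_compositions (b - n) \<times> ordered_partitions n)"
  let ?cut = "\<lambda>(u, m). (sum_list (drop m u), take m u, drop m u)"
  let ?glue = "\<lambda>(n :: nat, l, v). (l @ v, length l)"
  have "bij_betw ?cut ?S ?T"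
  proof (rule bij_betw_byWitness[where f' = ?glue])
    show "\<forall>a\<in>?S. ?glue (?cut a) = a"
      by (auto simp: nonincreasing_prefixes_def)
    show "\<forall>a\<in>?T. ?cut (?glue a) = a"
      by (auto simp: ordered_partitions_def)
    show "?glue ` ?T \<subseteq> ?S"
      by (auto simp: nonincreasing_prefixes_def nonincreasing_compositions_def ordered_partitions_def)
    show "?cut ` ?S \<subseteq> ?T"
    proof
      fix x assume "x \<in> ?cut ` ?S"
      then obtain u m where u: "u \<in> ordered_partitions b" and m: "m \<in> nonincreasing_prefixes u"
        and x: "x = (sum_list (drop m u), take m u, drop m u)" by auto
      have pos: "\<forall>x\<in>set u. 0 < x" and sum: "sum_list u = b"
        using u by (auto simp: ordered_partitions_def)
      have "sum_list (take m u) + sum_list (drop m u) = b"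
        using sum by (metis append_take_drop_id sum_list_append)
      moreover have "\<forall>x\<in>set (take m u). 0 < x" "\<forall>x\<in>set (drop m u). 0 < x"
        using pos by (auto dest: in_set_takeD in_set_dropD)
      ultimately show "x \<in> ?T" using m x
        by (auto simp: nonincreasing_prefixes_def nonincreasing_compositions_def ordered_partitions_def)
    qed
  qed
  hence "card ?S = card ?T" by (rule bij_betw_same_card)
  moreover have "finite (nonincreasing_compositions m)" for m
    by (rule finite_subset[OF _ finite_ordered_partitions[of m]])
      (auto simp: nonincreasing_compositions_def ordered_partitions_def)
  moreover have "finite (nonincreasing_prefixes u)" for u
    by (rule finite_subset[of _ "{..length u}"]) (auto simp: nonincreasing_prefixes_def)
  ultimately show ?thesis
    using finite_ordered_partitions
    by (simp add: trace_A_def A_entry_diagonal card_nonincreasing_compositions card_cartesian_product)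
qed

lemma count_one_le_sum_mset: "count p 1 \<le> sum_mset (p :: nat multiset)"
  by (induction p) auto

lemma card_unordered_partitions_with_ones:
  assumes "k \<le> b"
  shows "card {p \<in> unordered_partitions b. k \<le> count p 1} = card (unordered_partitions (b - k))"
proof -
  have "bij_betw (\<lambda>p. p - replicate_mset k 1) {p \<in> unordered_partitions b. k \<le> count p 1}
          (unordered_partitions (b - k))"
  proof (rule bij_betw_byWitness[where f' = "\<lambda>q. q + replicate_mset k 1"])
    show "(\<lambda>p. p - replicate_mset k 1) ` {p \<in> unordered_partitions b. k \<le> count p 1}
            \<subseteq> unordered_partitions (b - k)"
      by (auto simp: unordered_partitions_def count_le_replicate_mset_subset_eq sum_mset_diff
          dest: in_diffD)
  qed (auto simp: unordered_partitions_def count_le_replicate_mset_subset_eq assms split: if_splits)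
  thus ?thesis by (rule bij_betw_same_card)
qed

theorem theorem11:
  fixes b :: nat
  shows "trace_A b = (\<Sum>p\<in>unordered_partitions b. 2 ^ count p 1)"
proof -
  have ones_le: "count p 1 \<le> b" if "p \<in> unordered_partitions b" for p
    using that count_one_le_sum_mset[of p] by (simp add: unordered_partitions_def)
  have "trace_A b = (\<Sum>n\<le>b. card {p \<in> unordered_partitions b. n \<le> count p 1} * card (ordered_partitions n))"
    unfolding trace_A_eq_convolution
    by (rule sum.cong[OF refl]) (metis atMost_iff card_unordered_partitions_with_ones)
  also have "\<dots> = (\<Sum>n\<le>b. \<Sum>p\<in>{p \<in> unordered_partitions b. n \<le> count p 1}. card (ordered_partitions n))"
    by simp
  also have "\<dots> = (\<Sum>p\<in>unordered_partitions b. \<Sum>n\<in>{n \<in> {..b}. n \<le> count p 1}. card (ordered_partitions n))"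
    using finite_unordered_partitions by (subst sum.swap_restrict) auto
  also have "\<dots> = (\<Sum>p\<in>unordered_partitions b. \<Sum>n\<le>count p 1. card (ordered_partitions n))"
    by (rule sum.cong) (auto dest: ones_le intro!: sum.cong)
  also have "\<dots> = (\<Sum>p\<in>unordered_partitions b. 2 ^ count p 1)"
    by (simp add: sum_card_ordered_partitions)
  finally show ?thesis .
qed

end
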